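(* Let $D$ be a Dyck path in the $n\times n$ lattice square and write the expansion of $LLT_D[X;1+q]$ in the elementary basis as $LLT_D[X;1+q]=\sum_{\mu\vdash n}P_\mu(q)\,e_\mu[X]$. Then $$\sum_{\mu\vdash n}P_\mu(q)=(1+q)^{\mathrm{dinv}(D)}.$$
   Context: A Dyck path $D$ in the $n\times n$ lattice square goes from $(0,0)$ to $(n,n)$ by unit North and East steps and stays weakly above the diagonal $y=x$. For $i=1,\dots,n$, let $a_i$ be the number of full lattice cells in row $i$ strictly between $D$ and the diagonal. A parking function $PF$ supported by $D$ is a bijective labeling of the $n$ cells immediately to the right of the North steps of $D$ by "cars" $1,\dots,n$, such that labels increase from bottom to top within each column. Let $c_i$ be the car in row $i$; it lies on diagonal $a_i$. A pair of rows $i<j$ contributes a primary dinv if $a_i=a_j$ and $c_i<c_j$, and a secondary dinv if $a_i=a_j+1$ and $c_i>c_j$. $\mathrm{dinv}(PF)$ is the total number of primary and secondary dinvs. The word $\sigma(PF)$ is the permutation obtained by reading the cars diagonal by diagonal, from the highest diagonal to the lowest, and within each diagonal from right to left. $\mathrm{pides}(PF)$ is the composition of $n$ encoding the descent set of $\sigma(PF)^{-1}$. $F_\alpha[X]$ is Gessel's fundamental quasisymmetric function indexed by the composition $\alpha$. The LLT polynomial of $D$ is $LLT_D[X;q]=\sum_{PF}q^{\mathrm{dinv}(PF)}F_{\mathrm{pides}(PF)}[X]$, summed over all parking functions supported by $D$; it is a symmetric function. $\mathrm{dinv}(D)$ is defined as $\mathrm{dinv}(PF)$ for the parking function $PF$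 supported by $D$ with $\sigma(PF)=n\cdots321$. *)

theory Defs
  imports "HOL-Library.Multiset" "HOL-Computational_Algebra.Polynomial"
begin

text \<open>A monomial x_{i1} ... x_{ik} in the variables x_0, x_1, ... is encoded by the
multiset of its variable indices. A (quasi)symmetric function is given by its
coefficient function on monomials.\<close>

type_synonym 'a sfun = "nat multiset \<Rightarrow> 'a"

definition sf_one :: "'a::comm_semiring_1 sfun" where
  "sf_one M = (if M = {#} then 1 else 0)"

definition sf_mult :: "'a::comm_semiring_1 sfun \<Rightarrow> 'a sfun \<Rightarrow> 'a sfun" where
  "sf_mult f g M = (\<Sum>A\<in>{A. A \<subseteq># M}. f A * g (M - A))"

definition comp_set :: "nat list \<Rightarrow> nat set" where
  "comp_set \<alpha> = set (map (\<lambda>k. sum_list (take k \<alpha>)) [1..<length \<alpha>])"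

definition gessel_F :: "nat list \<Rightarrow> 'a::comm_semiring_1 sfun" where
  "gessel_F \<alpha> M = of_nat (card {w :: nat list. length w = sum_list \<alpha> \<and> sorted w \<and>
      (\<forall>j\<in>comp_set \<alpha>. w ! (j - 1) < w ! j) \<and> mset w = M})"

definition elem_sym :: "nat \<Rightarrow> 'a::comm_semiring_1 sfun" where
  "elem_sym k M = of_nat (card {w :: nat list. length w = k \<and> sorted_wrt (<) w \<and> mset w = M})"

definition elem_sym_part :: "nat list \<Rightarrow> 'a::comm_semiring_1 sfun" where
  "elem_sym_part \<mu> = foldr sf_mult (map elem_sym \<mu>) sf_one"

definition partitions :: "nat \<Rightarrow> nat list set" where
  "partitions n = {\<mu>. sum_list \<mu> = n \<and> (\<forall>x\<in>set \<mu>. 0 < x) \<and> sorted_wrt (\<ge>) \<mu>}"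

text \<open>Composition of n with given descent set S (subset of {1..n-1}).\<close>
definition comp_of_set :: "nat \<Rightarrow> nat set \<Rightarrow> nat list" where
  "comp_of_set n S = (if n = 0 then [] else
     (let ps = sorted_list_of_set S @ [n] in map2 (-) ps (0 # ps)))"

text \<open>A path is a list of steps, True = North, False = East.\<close>
definition dyck_path :: "nat \<Rightarrow> bool list \<Rightarrow> bool" where
  "dyck_path n D \<longleftrightarrow> length D = 2 * n \<and> length (filter id D) = n \<and>
     (\<forall>k\<le>length D. length (filter Not (take k D)) \<le> length (filter id (take k D)))"

fun xcoord_aux :: "nat \<Rightarrow> bool list \<Rightarrow> nat list" where
  "xcoord_aux e [] = []"
| "xcoord_aux e (True # s) = e # xcoord_aux e s"
| "xcoord_aux e (False # s) = xcoord_aux (Suc e) s"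

text \<open>x-coordinate of the r-th North step (rows indexed 0..n-1; row r is row r+1 of the paper).\<close>
definition xcoord :: "bool list \<Rightarrow> nat list" where
  "xcoord D = xcoord_aux 0 D"

text \<open>a_i: number of full cells in the row strictly between D and the diagonal.\<close>
definition area :: "bool list \<Rightarrow> nat list" where
  "area D = map (\<lambda>(r, x). r - x) (zip [0..<length (xcoord D)] (xcoord D))"

text \<open>Parking functions supported by D: c ! r is the car in row r.\<close>
definition parking_functions :: "nat \<Rightarrow> bool list \<Rightarrow> nat list set" where
  "parking_functions n D = {c. length c = n \<and> distinct c \<and> set c = {1..n} \<and>
     (\<forall>i j. i < j \<and> j < n \<and> xcoord D ! i = xcoord D ! j \<longrightarrow> c ! i < c ! j)}"

definition dinv_pf :: "nat \<Rightarrow> bool list \<Rightarrow> nat list \<Rightarrow> nat" where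
  "dinv_pf n D c = card {(i, j). i < j \<and> j < n \<and>
     ((area D ! i = area D ! j \<and> c ! i < c ! j) \<or>
      (area D ! i = area D ! j + 1 \<and> c ! i > c ! j))}"

text \<open>Reading word: diagonals from highest to lowest, each read right to left
 (i.e. by decreasing row).\<close>
definition sigma_pf :: "nat \<Rightarrow> bool list \<Rightarrow> nat list \<Rightarrow> nat list" where
  "sigma_pf n D c = concat (map (\<lambda>k. rev [c ! i. i \<leftarrow> [0..<n], area D ! i = k]) (rev [0..<n]))"

definition pos_in :: "nat list \<Rightarrow> nat \<Rightarrow> nat" where
  "pos_in w v = (LEAST p. p < length w \<and> w ! p = v)"

text \<open>pides: composition encoding the descent set of sigma^{-1}.\<close>
definition pides :: "nat \<Rightarrow> bool list \<Rightarrow> nat list \<Rightarrow> nat list" where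
  "pides n D c = comp_of_set n
     {i. 1 \<le> i \<and> i < n \<and> pos_in (sigma_pf n D c) i > pos_in (sigma_pf n D c) (i + 1)}"

definition dinv_path :: "nat \<Rightarrow> bool list \<Rightarrow> nat" where
  "dinv_path n D = dinv_pf n D (THE c. c \<in> parking_functions n D \<and> sigma_pf n D c = rev [1..<n+1])"

definition LLT :: "nat \<Rightarrow> bool list \<Rightarrow> int poly sfun" where
  "LLT n D M = (\<Sum>c\<in>parking_functions n D. monom 1 (dinv_pf n D c) * gessel_F (pides n D c) M)"

definition LLT_shift :: "nat \<Rightarrow> bool list \<Rightarrow> int poly sfun" where
  "LLT_shift n D M = pcompose (LLT n D M) [:1, 1:]"

end

(*
  Let omega_at_one be the linear functional f |-> (omega f)(1, 0, 0, ...) on symmetric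
  functions of degree n. Since omega e_mu = h_mu and h_k(1) = 1, it sends every e_mu to 1,
  so applied to LLT_D[X;1+q] it returns the sum of the P_mu(q). Applied instead to the
  expansion of LLT_D[X;1+q] in fundamental quasisymmetric functions, it kills every F_alpha
  except F_(1,...,1) = e_n. But pides(PF) = (1,...,1) says that sigma(PF)^-1 descends
  everywhere, i.e. sigma(PF) = n...21, and exactly one parking function supported by D has
  this reading word; its term is (1+q)^dinv(D).
  On coefficient functions the functional is computed by inclusion-exclusion on the
  exponent of the variable x_0, which turns both evaluations into inductions on n.
*)
theory Submission
  imports Defs
begin

section \<open>Splitting off the variable x_0\<close>

text \<open>Every monomial is uniquely x_0^a times the image of a monomial N under x_i \<mapsto> x_(i+1).\<close>
definition lift_mset :: "nat \<Rightarrow> nat multiset \<Rightarrow> nat multiset" where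
  "lift_mset a N = replicate_mset a 0 + image_mset Suc N"

lemma count_lift_mset: "count (lift_mset a N) y = (if y = 0 then a else count N (y - 1))"
  by (induction N) (auto simp: lift_mset_def)

lemma size_lift_mset [simp]: "size (lift_mset a N) = a + size N"
  by (simp add: lift_mset_def)

lemma lift_mset_eq_iff: "lift_mset a N = lift_mset b B \<longleftrightarrow> a = b \<and> N = B"
proof
  assume eq: "lift_mset a N = lift_mset b B"
  have "a = b"
    using arg_cong[OF eq, of "\<lambda>M. count M 0"] by (simp add: count_lift_mset)
  moreover have "N = B"
    using arg_cong[OF eq, of "\<lambda>M. count M (Suc x)" for x]
    by (intro multiset_eqI) (simp add: count_lift_mset)
  ultimately show "a = b \<and> N = B" ..
qed simp

lemma ex_lift_mset: "\<exists>b B. A = lift_mset b B"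
proof (induction A)
  case empty
  have "{#} = lift_mset 0 {#}" by (simp add: lift_mset_def)
  then show ?case by blast
next
  case (add x A)
  then obtain b B where A: "A = lift_mset b B" by blast
  show ?case
  proof (cases x)
    case 0
    then have "add_mset x A = lift_mset (Suc b) B" by (simp add: A lift_mset_def)
    then show ?thesis by blast
  next
    case (Suc y)
    then have "add_mset x A = lift_mset b (add_mset y B)" by (simp add: A lift_mset_def)
    then show ?thesis by blast
  qed
qed

lemma lift_mset_subseteq_iff: "lift_mset b B \<subseteq># lift_mset a N \<longleftrightarrow> b \<le> a \<and> B \<subseteq># N"
proof
  assume le: "lift_mset b B \<subseteq># lift_mset a N"
  have "b \<le> a"
    using mset_subset_eq_count[OF le, of 0] by (simp add: count_lift_mset)
  moreover have "count B x \<le> count N x" for x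
    using mset_subset_eq_count[OF le, of "Suc x"] by (simp add: count_lift_mset)
  ultimately show "b \<le> a \<and> B \<subseteq># N"
    by (simp add: subseteq_mset_def)
qed (auto simp: subseteq_mset_def count_lift_mset)

lemma lift_mset_diff: "lift_mset a N - lift_mset b B = lift_mset (a - b) (N - B)"
  by (rule multiset_eqI) (simp add: count_lift_mset)

lemma sum_submultisets_lift_mset:
  "(\<Sum>A\<in>{A. A \<subseteq># lift_mset a N}. g A) = (\<Sum>b\<le>a. \<Sum>B\<in>{B. B \<subseteq># N}. g (lift_mset b B))"
proof -
  have "bij_betw (\<lambda>(b, B). lift_mset b B) ({..a} \<times> {B. B \<subseteq># N}) {A. A \<subseteq># lift_mset a N}"
  proof (rule bij_betwI')
    fix A assume "A \<in> {A. A \<subseteq># lift_mset a N}"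
    moreover obtain b B where "A = lift_mset b B"
      using ex_lift_mset by blast
    ultimately show "\<exists>x\<in>{..a} \<times> {B. B \<subseteq># N}. A = (\<lambda>(b, B). lift_mset b B) x"
      by (auto simp: lift_mset_subseteq_iff)
  qed (auto simp: lift_mset_eq_iff lift_mset_subseteq_iff)
  then show ?thesis
    by (simp add: sum.cartesian_product sum.reindex_bij_betw[symmetric] case_prod_unfold)
qed

lemma sf_mult_lift_mset:
  "sf_mult f g (lift_mset a N) =
     (\<Sum>b\<le>a. sf_mult (\<lambda>B. f (lift_mset b B)) (\<lambda>B. g (lift_mset (a - b) B)) N)"
  by (simp add: sf_mult_def sum_submultisets_lift_mset lift_mset_diff)

lemma sf_mult_cmult_left: "sf_mult (\<lambda>M. c * f M) g M = c * sf_mult f g M"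
  by (simp add: sf_mult_def sum_distrib_left mult.assoc)

lemma sf_mult_cmult_right: "sf_mult f (\<lambda>M. c * g M) M = c * sf_mult f g M"
  by (simp add: sf_mult_def sum_distrib_left mult.left_commute)

lemma sf_mult_sum_right: "sf_mult f (\<lambda>M. \<Sum>x\<in>X. g x M) M = (\<Sum>x\<in>X. sf_mult f (g x) M)"
  by (simp add: sf_mult_def sum_distrib_left sum.swap[of _ X])

lemma sorted_list_of_multiset_lift_mset:
  "sorted_list_of_multiset (lift_mset a N) = replicate a 0 @ map Suc (sorted_list_of_multiset N)"
proof -
  have "lift_mset a N = mset (replicate a 0 @ map Suc (sorted_list_of_multiset N))"
    by (simp add: lift_mset_def)
  moreover have "sorted (replicate a 0 @ map Suc (sorted_list_of_multiset N))"
    by (simp add: sorted_append sorted_map)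
  ultimately show ?thesis
    by (metis sorted_list_of_multiset_mset sorted_sort_id)
qed

text \<open>
  Unfolding the recursion, omega_at_one n f is the sum over all compositions \<alpha> of n of
  (-1)^(n - length \<alpha>) times the coefficient of x_0^\<alpha>_1 x_1^\<alpha>_2 ... in f; on symmetric f of
  degree n this is (\<omega> f)(1, 0, 0, ...), the specialization p_k \<mapsto> (-1)^(k-1).
\<close>
function omega_at_one :: "nat \<Rightarrow> 'a::comm_ring_1 sfun \<Rightarrow> 'a" where
  "omega_at_one n f = (if n = 0 then f {#} else
     (\<Sum>a = 1..n. (-1) ^ (a - 1) * omega_at_one (n - a) (\<lambda>N. f (lift_mset a N))))"
  by pat_completeness auto
termination by (relation "measure fst") auto

lemma omega_at_one_0 [simp]: "omega_at_one 0 f = f {#}"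
  by simp

lemma omega_at_one_pos:
  "0 < n \<Longrightarrow> omega_at_one n f =
     (\<Sum>a = 1..n. (-1) ^ (a - 1) * omega_at_one (n - a) (\<lambda>N. f (lift_mset a N)))"
  by simp

declare omega_at_one.simps [simp del]

lemma omega_at_one_cmult: "omega_at_one n (\<lambda>M. c * f M) = c * omega_at_one n f"
proof (induction n arbitrary: f rule: less_induct)
  case (less n)
  then show ?case
    by (cases "n = 0") (simp_all add: omega_at_one_pos sum_distrib_left mult.left_commute)
qed

lemma omega_at_one_sum:
  "omega_at_one n (\<lambda>M. \<Sum>x\<in>X. g x M) = (\<Sum>x\<in>X. omega_at_one n (g x))"
proof (induction n arbitrary: g rule: less_induct)
  case (less n)
  then show ?case
    by (cases "n = 0")
      (simp_all add: omega_at_one_pos sum_distrib_left sum.swap[of _ _ X])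
qed

section \<open>Elementary symmetric functions\<close>

lemma card_sorted_words:
  "card {w. sorted w \<and> mset w = M \<and> P w} = of_bool (P (sorted_list_of_multiset M))"
proof -
  have "sorted w \<and> mset w = M \<longleftrightarrow> w = sorted_list_of_multiset M" for w
  proof
    assume "sorted w \<and> mset w = M"
    then show "w = sorted_list_of_multiset M"
      by (metis sorted_list_of_multiset_mset sorted_sort_id)
  qed simp
  then have "{w. sorted w \<and> mset w = M \<and> P w} = {w. w = sorted_list_of_multiset M \<and> P w}"
    by blast
  then show ?thesis
    by (simp add: Collect_conv_if)
qed

lemma length_sorted_list_of_multiset: "length (sorted_list_of_multiset M) = size M"
  by (metis mset_sorted_list_of_multiset size_mset)

lemma distinct_replicate_iff: "distinct (replicate n x) \<longleftrightarrow> n \<le> 1"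
  by (induction n) auto

lemma elem_sym_eq: "elem_sym k M = of_bool (size M = k \<and> distinct (sorted_list_of_multiset M))"
proof -
  have "{w. length w = k \<and> sorted_wrt (<) w \<and> mset w = M} =
      {w. sorted w \<and> mset w = M \<and> length w = k \<and> distinct w}"
    by (auto simp: strict_sorted_iff)
  then show ?thesis
    by (simp add: elem_sym_def card_sorted_words length_sorted_list_of_multiset)
qed

lemma elem_sym_lift_mset:
  "elem_sym k (lift_mset b B) = of_bool (b \<le> 1 \<and> b \<le> k) * elem_sym (k - b) B"
  unfolding elem_sym_eq of_bool_conj[symmetric] sorted_list_of_multiset_lift_mset
  by (intro arg_cong[where f = of_bool]) (auto simp: distinct_map distinct_replicate_iff)

lemma sf_one_lift_mset: "sf_one (lift_mset a N) = of_bool (a = 0) * sf_one N"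
  by (simp add: sf_one_def lift_mset_def)

lemma elem_sym_part_Nil: "elem_sym_part [] = sf_one"
  by (simp add: elem_sym_part_def)

lemma elem_sym_part_Cons: "elem_sym_part (k # \<mu>) = sf_mult (elem_sym k) (elem_sym_part \<mu>)"
  by (simp add: elem_sym_part_def)

lemma elem_sym_part_empty: "elem_sym_part \<mu> {#} = of_bool (sum_list \<mu> = 0)"
proof (induction \<mu>)
  case (Cons k \<mu>)
  have "{A. A \<subseteq># {#}} = {{#}}" by auto
  then show ?case
    using Cons by (auto simp: elem_sym_part_Cons sf_mult_def elem_sym_eq)
qed (simp add: elem_sym_part_Nil sf_one_def)

text \<open>The 0/1-vectors \<delta> \<le> \<mu> record which factors e_(\<mu>_i) of e_\<mu> contribute the variable x_0.\<close>
definition bin_vecs_le :: "nat list \<Rightarrow> nat list set" where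
  "bin_vecs_le \<mu> = {\<delta>. list_all2 (\<lambda>d k. d \<le> 1 \<and> d \<le> k) \<delta> \<mu>}"

lemma bin_vecs_le_Nil [simp]: "bin_vecs_le [] = {[]}"
  by (simp add: bin_vecs_le_def)

lemma sum_bin_vecs_le_Cons:
  "(\<Sum>\<delta>\<in>bin_vecs_le (k # \<mu>). h \<delta>) = (\<Sum>b | b \<le> 1 \<and> b \<le> k. \<Sum>\<delta>\<in>bin_vecs_le \<mu>. h (b # \<delta>))"
proof -
  have "bin_vecs_le (k # \<mu>) = (\<lambda>(b, \<delta>). b # \<delta>) ` ({b. b \<le> 1 \<and> b \<le> k} \<times> bin_vecs_le \<mu>)"
    by (auto simp: bin_vecs_le_def list_all2_Cons2)
  moreover have "inj_on (\<lambda>(b, \<delta>). b # \<delta>) ({b. b \<le> 1 \<and> b \<le> k} \<times> bin_vecs_le \<mu>)"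
    by (auto simp: inj_on_def)
  ultimately show ?thesis
    by (simp add: sum.reindex sum.cartesian_product case_prod_unfold)
qed

lemma sum_list_map2_minus_bin_vecs_le:
  assumes "\<delta> \<in> bin_vecs_le \<mu>"
  shows "sum_list \<delta> \<le> sum_list \<mu>" "sum_list (map2 (-) \<mu> \<delta>) = sum_list \<mu> - sum_list \<delta>"
proof -
  have "list_all2 (\<lambda>d k. d \<le> 1 \<and> d \<le> k) \<delta> \<mu>"
    using assms by (simp add: bin_vecs_le_def)
  then have "sum_list \<delta> \<le> sum_list \<mu> \<and> sum_list (map2 (-) \<mu> \<delta>) = sum_list \<mu> - sum_list \<delta>"
    by (induction rule: list_all2_induct) auto
  then show "sum_list \<delta> \<le> sum_list \<mu>" "sum_list (map2 (-) \<mu> \<delta>) = sum_list \<mu> - sum_list \<delta>"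
    by auto
qed

lemma sum_bin_vecs_le_sign:
  "(\<Sum>\<delta>\<in>bin_vecs_le \<mu>. (-1) ^ sum_list \<delta>) = (of_bool (sum_list \<mu> = 0) :: 'a::comm_ring_1)"
proof (induction \<mu>)
  case (Cons k \<mu>)
  have "{b. b \<le> 1 \<and> b \<le> k} = (if k = 0 then {0} else {0, 1})"
    by auto
  then have "(\<Sum>b | b \<le> 1 \<and> b \<le> k. (-1) ^ b) = (of_bool (k = 0) :: 'a)"
    by simp
  moreover have "(\<Sum>\<delta>\<in>bin_vecs_le (k # \<mu>). (-1) ^ sum_list \<delta>) =
      (\<Sum>b | b \<le> 1 \<and> b \<le> k. (-1) ^ b) * (\<Sum>\<delta>\<in>bin_vecs_le \<mu>. (-1::'a) ^ sum_list \<delta>)"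
    by (simp add: sum_bin_vecs_le_Cons power_add sum_product)
  ultimately show ?case
    using Cons by (simp add: of_bool_conj)
qed simp

lemma sum_bin_vecs_le_zero: "(\<Sum>\<delta>\<in>bin_vecs_le \<mu>. of_bool (sum_list \<delta> = 0)) = (1::'a::comm_semiring_1)"
proof (induction \<mu>)
  case (Cons k \<mu>)
  have "(\<Sum>b | b \<le> 1 \<and> b \<le> k. \<Sum>\<delta>\<in>bin_vecs_le \<mu>. of_bool (sum_list (b # \<delta>) = 0)) =
      (\<Sum>b | b \<le> 1 \<and> b \<le> k. of_bool (b = 0) * (\<Sum>\<delta>\<in>bin_vecs_le \<mu>. of_bool (sum_list \<delta> = 0)) :: 'a)"
    by (simp add: sum_distrib_left of_bool_conj)
  also have "\<dots> = 1"
    using Cons by (simp add: sum.If_cases)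
  finally show ?case
    by (simp add: sum_bin_vecs_le_Cons)
qed simp

lemma elem_sym_part_lift_mset:
  "elem_sym_part \<mu> (lift_mset a N) =
     (\<Sum>\<delta>\<in>bin_vecs_le \<mu>. of_bool (sum_list \<delta> = a) * elem_sym_part (map2 (-) \<mu> \<delta>) N)"
proof (induction \<mu> arbitrary: a N)
  case Nil
  show ?case by (simp add: elem_sym_part_Nil sf_one_lift_mset)
next
  case (Cons k \<mu>)
  define G where "G b = (\<Sum>\<delta>\<in>bin_vecs_le \<mu>. of_bool (b \<le> 1 \<and> b \<le> k \<and> b + sum_list \<delta> = a) *
      (elem_sym_part ((k - b) # map2 (-) \<mu> \<delta>) N :: 'a))" for b
  have "(elem_sym_part (k # \<mu>) (lift_mset a N) :: 'a) =
      (\<Sum>b\<le>a. \<Sum>\<delta>\<in>bin_vecs_le \<mu>. of_bool (b \<le> 1 \<and> b \<le> k) * of_bool (sum_list \<delta> = a - b) *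
         elem_sym_part ((k - b) # map2 (-) \<mu> \<delta>) N)"
    unfolding elem_sym_part_Cons[of k] sf_mult_lift_mset elem_sym_lift_mset Cons.IH
      sf_mult_cmult_left sf_mult_cmult_right sf_mult_sum_right
    by (simp only: sum_distrib_left mult.assoc elem_sym_part_Cons)
  also have "\<dots> = (\<Sum>b\<le>a. G b)"
    unfolding G_def by (intro sum.cong refl) (auto simp: of_bool_def)
  also have "\<dots> = (\<Sum>b\<le>a + 1. G b)"
    by (rule sum.mono_neutral_left) (simp_all add: G_def)
  also have "\<dots> = (\<Sum>b | b \<le> 1 \<and> b \<le> k. G b)"
  proof (rule sum.mono_neutral_right)
    show "\<forall>b\<in>{..a + 1} - {b. b \<le> 1 \<and> b \<le> k}. G b = 0"
    proof
      fix b assume "b \<in> {..a + 1} - {b. b \<le> 1 \<and> b \<le> k}"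
      then have "(b \<le> 1 \<and> b \<le> k \<and> b + s = a) = False" for s
        by auto
      then show "G b = 0"
        unfolding G_def by (simp only: of_bool_eq(1) mult_zero_left sum.neutral_const)
    qed
  qed auto
  also have "\<dots> = (\<Sum>\<delta>\<in>bin_vecs_le (k # \<mu>).
      of_bool (sum_list \<delta> = a) * elem_sym_part (map2 (-) (k # \<mu>) \<delta>) N)"
    unfolding sum_bin_vecs_le_Cons G_def by (intro sum.cong refl) auto
  finally show ?case .
qed

lemma alternating_sum_bin_vecs_le:
  assumes "sum_list \<mu> = n" "0 < n"
  shows "(\<Sum>a = 1..n. (-1) ^ (a - 1) * (\<Sum>\<delta>\<in>bin_vecs_le \<mu>. of_bool (sum_list \<delta> = a))) =
    (1::'a::comm_ring_1)"
proof -
  have signs: "(\<Sum>a = 1..n. of_bool (s = a) * (-1) ^ (a - 1)) = (of_bool (s = 0) - (-1) ^ s :: 'a)"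
    if "s \<le> n" for s
  proof -
    have "(\<Sum>a = 1..n. of_bool (s = a) * (-1) ^ (a - 1)) =
        (\<Sum>a = 1..n. if a = s then (-1) ^ (s - 1) else (0::'a))"
      by (intro sum.cong) auto
    also have "\<dots> = of_bool (s = 0) - (-1) ^ s"
      using that by (cases s) simp_all
    finally show ?thesis .
  qed
  have "(\<Sum>a = 1..n. (-1) ^ (a - 1) * (\<Sum>\<delta>\<in>bin_vecs_le \<mu>. of_bool (sum_list \<delta> = a))) =
      (\<Sum>\<delta>\<in>bin_vecs_le \<mu>. \<Sum>a = 1..n. of_bool (sum_list \<delta> = a) * (-1) ^ (a - 1) :: 'a)"
    by (simp only: sum_distrib_left mult.commute[of "(-1) ^ _"]) (rule sum.swap)
  also have "\<dots> = (\<Sum>\<delta>\<in>bin_vecs_le \<mu>. of_bool (sum_list \<delta> = 0) - (-1) ^ sum_list \<delta>)"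
    using sum_list_map2_minus_bin_vecs_le(1) assms(1) by (intro sum.cong refl signs) auto
  also have "\<dots> = 1"
    using assms by (simp only: sum_subtractf sum_bin_vecs_le_zero sum_bin_vecs_le_sign) simp
  finally show ?thesis .
qed

lemma omega_at_one_elem_sym_part: "omega_at_one (sum_list \<mu>) (elem_sym_part \<mu>) = 1"
proof (induction "sum_list \<mu>" arbitrary: \<mu> rule: less_induct)
  case less
  define n where "n = sum_list \<mu>"
  show ?case
  proof (cases "n = 0")
    case True
    then have "sum_list \<mu> = 0" by (simp add: n_def)
    then show ?thesis by (simp add: elem_sym_part_empty del: sum_list_eq_0_iff)
  next
    case False
    have "omega_at_one n (elem_sym_part \<mu> :: 'a sfun) = (\<Sum>a = 1..n. (-1) ^ (a - 1) *
        (\<Sum>\<delta>\<in>bin_vecs_le \<mu>. of_bool (sum_list \<delta> = a) *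
           omega_at_one (n - a) (elem_sym_part (map2 (-) \<mu> \<delta>))))"
      using False
      by (simp add: omega_at_one_pos elem_sym_part_lift_mset omega_at_one_sum omega_at_one_cmult)
    also have "\<dots> = (\<Sum>a = 1..n. (-1) ^ (a - 1) * (\<Sum>\<delta>\<in>bin_vecs_le \<mu>. of_bool (sum_list \<delta> = a)))"
    proof (intro sum.cong refl arg_cong2[where f = "(*)"])
      fix a \<delta> assume a: "a \<in> {1..n}" and \<delta>: "\<delta> \<in> bin_vecs_le \<mu>"
      show "of_bool (sum_list \<delta> = a) * omega_at_one (n - a) (elem_sym_part (map2 (-) \<mu> \<delta>)) =
          (of_bool (sum_list \<delta> = a) :: 'a)"
      proof (cases "sum_list \<delta> = a")
        case True
        then have "sum_list (map2 (-) \<mu> \<delta>) = n - a" "n - a < n"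
          using a \<delta> by (auto simp: n_def sum_list_map2_minus_bin_vecs_le)
        then show ?thesis
          using less(1)[of "map2 (-) \<mu> \<delta>"] True by (simp add: n_def)
      qed simp
    qed
    also have "\<dots> = 1"
      by (rule alternating_sum_bin_vecs_le[OF n_def[symmetric]]) (use False in simp)
    finally show ?thesis by (simp add: n_def)
  qed
qed

section \<open>Fundamental quasisymmetric functions\<close>

definition ascents_at :: "nat set \<Rightarrow> nat list \<Rightarrow> bool" where
  "ascents_at S w \<longleftrightarrow> (\<forall>j\<in>S. 0 < j \<and> j < length w \<longrightarrow> w ! (j - 1) < w ! j)"

text \<open>Gessel's F indexed by the descent set S \<subseteq> {1, ..., n-1} rather than by the composition.\<close>
definition fund_qsym :: "nat \<Rightarrow> nat set \<Rightarrow> 'a::comm_semiring_1 sfun" where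
  "fund_qsym n S M = of_bool (size M = n \<and> ascents_at S (sorted_list_of_multiset M))"

lemma nth_lift_word:
  shows "j < a \<Longrightarrow> (replicate a 0 @ map Suc w) ! j = 0"
    and "j < length w \<Longrightarrow> (replicate a 0 @ map Suc w) ! (a + j) = Suc (w ! j)"
  by (simp_all add: nth_append)

lemma ascents_at_liftD:
  assumes "ascents_at S (replicate a 0 @ map Suc w)"
  shows "S \<inter> {0<..<a} = {}" "ascents_at {j. j + a \<in> S} w"
proof -
  let ?u = "replicate a 0 @ map Suc w"
  have asc: "?u ! (j - 1) < ?u ! j" if "j \<in> S" "0 < j" "j < a + length w" for j
    using assms that by (simp add: ascents_at_def)
  show "S \<inter> {0<..<a} = {}"
  proof (rule ccontr)
    assume "S \<inter> {0<..<a} \<noteq> {}"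
    then obtain j where "j \<in> S" "0 < j" "j < a"
      by auto
    then show False
      using asc[of j] nth_lift_word(1)[where j = j] nth_lift_word(1)[where j = "j - 1"] by simp
  qed
  show "ascents_at {j. j + a \<in> S} w"
    unfolding ascents_at_def
  proof (intro ballI impI)
    fix j assume j: "j \<in> {j. j + a \<in> S}" "0 < j \<and> j < length w"
    then obtain i where i: "j = Suc i"
      by (cases j) auto
    have "?u ! (a + i) < ?u ! (a + Suc i)"
      using asc[of "j + a"] j i by (auto simp: add.commute)
    then show "w ! (j - 1) < w ! j"
      using j i nth_lift_word(2)[where j = i] nth_lift_word(2)[where j = "Suc i"] by simp
  qed
qed

lemma ascents_at_liftI:
  assumes "0 < a" "S \<inter> {0<..<a} = {}" "ascents_at {j. j + a \<in> S} w"
  shows "ascents_at S (replicate a 0 @ map Suc w)"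
  unfolding ascents_at_def
proof (intro ballI impI)
  let ?u = "replicate a 0 @ map Suc w"
  fix j assume j: "j \<in> S" "0 < j \<and> j < length ?u"
  then have "j \<notin> {0<..<a}"
    using assms(2) by blast
  then obtain i where i: "j = a + i"
    using j le_Suc_ex[of a j] by fastforce
  show "?u ! (j - 1) < ?u ! j"
  proof (cases i)
    case 0
    then show ?thesis
      using i j assms(1) nth_lift_word(1)[where j = "a - 1"] nth_lift_word(2)[where j = 0] by simp
  next
    case (Suc i')
    then have "Suc i' \<in> {j. j + a \<in> S}" "Suc i' < length w"
      using i j by (simp_all add: add.commute)
    then have "w ! i' < w ! Suc i'"
      using assms(3)[unfolded ascents_at_def, rule_format, of "Suc i'"] by simp
    then show ?thesis
      using i Suc \<open>Suc i' < length w\<close> nth_lift_word(2)[where j = i'] nth_lift_word(2)[where j = "Suc i'"]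
      by simp
  qed
qed

lemma fund_qsym_lift_mset:
  assumes "0 < a" "a \<le> n"
  shows "fund_qsym n S (lift_mset a N) =
    of_bool (S \<inter> {0<..<a} = {}) * fund_qsym (n - a) {j. j + a \<in> S} N"
proof -
  have "ascents_at S (replicate a 0 @ map Suc w) \<longleftrightarrow>
      S \<inter> {0<..<a} = {} \<and> ascents_at {j. j + a \<in> S} w" for w
    using ascents_at_liftD[of S a w] ascents_at_liftI[OF assms(1), of S w] by blast
  then show ?thesis
    unfolding fund_qsym_def sorted_list_of_multiset_lift_mset of_bool_conj[symmetric]
    using assms by (intro arg_cong[where f = of_bool]) auto
qed

lemma alternating_sum_separating_points_gap:
  assumes t: "t \<in> {0<..<n} - S" and above: "{t<..<n} \<subseteq> S"
  shows "(\<Sum>a = 1..n. (-1) ^ (a - 1) * of_bool (S \<inter> {0<..<a} = {} \<and> {a<..<n} \<subseteq> S)) =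
    (0::'a::comm_ring_1)"
proof -
  define c :: "nat \<Rightarrow> 'a"
    where "c a = (-1) ^ (a - 1) * of_bool (S \<inter> {0<..<a} = {} \<and> {a<..<n} \<subseteq> S)" for a
  have "c a = 0" if "a \<in> {1..n} - {t, Suc t}" for a
  proof (cases "a < t")
    case True
    then have "\<not> {a<..<n} \<subseteq> S"
      using t by auto
    then show ?thesis by (simp add: c_def)
  next
    case False
    then have "Suc t \<in> S \<inter> {0<..<a}"
      using that above by auto
    then have "S \<inter> {0<..<a} \<noteq> {}"
      by blast
    then show ?thesis by (simp add: c_def)
  qed
  then have "sum c {1..n} = sum c {t, Suc t}"
    using t by (intro sum.mono_neutral_right) auto
  also have "\<dots> = c t + c (Suc t)"
    by simp
  also have "\<dots> = 0"
  proof -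
    have "S \<inter> {0<..<Suc t} = {} \<longleftrightarrow> S \<inter> {0<..<t} = {}"
      using t by (auto simp: less_Suc_eq)
    moreover have "{Suc t<..<n} \<subseteq> S"
      using above by auto
    moreover obtain m where "t = Suc m"
      using t by (cases t) auto
    ultimately show ?thesis
      using above by (simp add: c_def)
  qed
  finally show ?thesis
    by (simp only: c_def[abs_def])
qed

lemma alternating_sum_separating_points:
  assumes "0 < n"
  shows "(\<Sum>a = 1..n. (-1) ^ (a - 1) * of_bool (S \<inter> {0<..<a} = {} \<and> {a<..<n} \<subseteq> S)) =
    (of_bool ({0<..<n} \<subseteq> S) :: 'a::comm_ring_1)"
proof (cases "{0<..<n} \<subseteq> S")
  case True
  define c :: "nat \<Rightarrow> 'a"
    where "c a = (-1) ^ (a - 1) * of_bool (S \<inter> {0<..<a} = {} \<and> {a<..<n} \<subseteq> S)" for a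
  have "c a = 0" if "a \<in> {1..n} - {1}" for a
  proof -
    have "1 \<in> S \<inter> {0<..<a}"
      using True that by auto
    then show ?thesis by (auto simp: c_def)
  qed
  then have "sum c {1..n} = c 1"
    using assms by (subst sum.mono_neutral_right[of "{1..n}" "{1}"]) auto
  also have "\<dots> = 1"
  proof -
    have "S \<inter> {0<..<1} = {}" "{1<..<n} \<subseteq> S"
      using True by auto
    then show ?thesis by (simp add: c_def)
  qed
  finally show ?thesis
    using True by (simp only: c_def[abs_def]) simp
next
  case False
  define t where "t = Max ({0<..<n} - S)"
  have "{0<..<n} - S \<noteq> {}"
    using False by auto
  then have t: "t \<in> {0<..<n} - S"
    unfolding t_def by (intro Max_in) auto
  have "{t<..<n} \<subseteq> S"
  proof
    fix j assume j: "j \<in> {t<..<n}"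
    show "j \<in> S"
    proof (rule ccontr)
      assume "j \<notin> S"
      then have "j \<le> t"
        using j t unfolding t_def by (intro Max_ge) auto
      then show False
        using j by simp
    qed
  qed
  then have "(\<Sum>a = 1..n. (-1) ^ (a - 1) * of_bool (S \<inter> {0<..<a} = {} \<and> {a<..<n} \<subseteq> S)) =
      (0::'a)"
    using t by (intro alternating_sum_separating_points_gap)
  also have "\<dots> = of_bool ({0<..<n} \<subseteq> S)"
    using False by simp
  finally show ?thesis .
qed

lemma omega_at_one_fund_qsym: "omega_at_one n (fund_qsym n S) = of_bool ({0<..<n} \<subseteq> S)"
proof (induction n arbitrary: S rule: less_induct)
  case (less n)
  show ?case
  proof (cases "n = 0")
    case True
    then show ?thesis by (simp add: fund_qsym_def ascents_at_def)
  next
    case False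
    have shift: "{0<..<n - a} \<subseteq> {j. j + a \<in> S} \<longleftrightarrow> {a<..<n} \<subseteq> S" for a
    proof
      assume "{0<..<n - a} \<subseteq> {j. j + a \<in> S}"
      then show "{a<..<n} \<subseteq> S"
        by (auto dest!: subsetD[of _ _ "j - a" for j])
    qed (auto intro!: subsetD[of "{a<..<n}" S])
    have "omega_at_one n (fund_qsym n S :: 'a sfun) = (\<Sum>a = 1..n. (-1) ^ (a - 1) *
        (of_bool (S \<inter> {0<..<a} = {}) * of_bool ({0<..<n - a} \<subseteq> {j. j + a \<in> S})))"
      using False less by (simp add: omega_at_one_pos fund_qsym_lift_mset omega_at_one_cmult)
    also have "\<dots> = (\<Sum>a = 1..n. (-1) ^ (a - 1) * of_bool (S \<inter> {0<..<a} = {} \<and> {a<..<n} \<subseteq> S))"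
      by (simp only: shift of_bool_conj)
    also have "\<dots> = of_bool ({0<..<n} \<subseteq> S)"
      using False by (intro alternating_sum_separating_points) simp
    finally show ?thesis .
  qed
qed

lemma gessel_F_eq:
  "gessel_F \<alpha> M = of_bool (size M = sum_list \<alpha> \<and>
     (\<forall>j\<in>comp_set \<alpha>. sorted_list_of_multiset M ! (j - 1) < sorted_list_of_multiset M ! j))"
proof -
  have "{w. length w = sum_list \<alpha> \<and> sorted w \<and> (\<forall>j\<in>comp_set \<alpha>. w ! (j - 1) < w ! j) \<and> mset w = M} =
      {w. sorted w \<and> mset w = M \<and> length w = sum_list \<alpha> \<and> (\<forall>j\<in>comp_set \<alpha>. w ! (j - 1) < w ! j)}"
    by blast
  then show ?thesis
    by (simp add: gessel_F_def card_sorted_words length_sorted_list_of_multiset)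
qed

lemma sum_list_take_differences:
  fixes ps :: "nat list"
  assumes "sorted (p # ps)" "k < length ps"
  shows "sum_list (take (Suc k) (map2 (-) ps (p # ps))) = ps ! k - p"
  using assms
proof (induction ps arbitrary: p k)
  case (Cons q ps)
  show ?case
  proof (cases k)
    case (Suc i)
    then have le: "p \<le> q" "q \<le> ps ! i"
      using Cons.prems by (simp_all add: nth_mem)
    have "sum_list (take (Suc k) (map2 (-) (q # ps) (p # q # ps))) = (q - p) + (ps ! i - q)"
      using Cons Suc by simp
    then show ?thesis
      using le Suc by simp
  qed simp
qed simp

lemma partial_sums_comp_of_set:
  assumes "S \<subseteq> {0<..<n}" "k \<le> card S"
  shows "sum_list (take (Suc k) (comp_of_set n S)) = (sorted_list_of_set S @ [n]) ! k"
proof (cases "n = 0")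
  case True
  then show ?thesis
    using assms by (simp add: comp_of_set_def)
next
  case False
  have "finite S"
    using assms(1) finite_subset by blast
  then have "sorted (0 # sorted_list_of_set S @ [n])"
    using assms(1) by (auto simp: sorted_append less_imp_le)
  then show ?thesis
    using False assms(2) sum_list_take_differences[of 0 "sorted_list_of_set S @ [n]" k] \<open>finite S\<close>
    by (simp add: comp_of_set_def Let_def)
qed

lemma length_comp_of_set: "S \<subseteq> {0<..<n} \<Longrightarrow> 0 < n \<Longrightarrow> length (comp_of_set n S) = Suc (card S)"
  by (simp add: comp_of_set_def Let_def)

lemma sum_list_comp_of_set:
  assumes "S \<subseteq> {0<..<n}"
  shows "sum_list (comp_of_set n S) = n"
proof (cases "n = 0")
  case False
  have "finite S"
    using assms finite_subset by blast
  then have "sum_list (comp_of_set n S) = sum_list (take (Suc (card S)) (comp_of_set n S))"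
    using assms False by (simp add: length_comp_of_set)
  also have "\<dots> = n"
    using partial_sums_comp_of_set[OF assms, of "card S"] \<open>finite S\<close> by (simp add: nth_append)
  finally show ?thesis .
qed (simp add: comp_of_set_def)

lemma comp_set_comp_of_set:
  assumes "S \<subseteq> {0<..<n}"
  shows "comp_set (comp_of_set n S) = S"
proof (cases "n = 0")
  case True
  then show ?thesis
    using assms by (simp add: comp_of_set_def comp_set_def)
next
  case False
  have "finite S"
    using assms finite_subset by blast
  have "map (\<lambda>k. sum_list (take k (comp_of_set n S))) [1..<Suc (card S)] = sorted_list_of_set S"
  proof (rule nth_equalityI)
    fix i assume "i < length (map (\<lambda>k. sum_list (take k (comp_of_set n S))) [1..<Suc (card S)])"
    then have "i < card S"
      by (simp del: upt_Suc)
    then show "map (\<lambda>k. sum_list (take k (comp_of_set n S))) [1..<Suc (card S)] ! i =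
        sorted_list_of_set S ! i"
      using partial_sums_comp_of_set[OF assms, of i] \<open>finite S\<close> by (simp add: nth_append del: upt_Suc)
  qed (use \<open>finite S\<close> in \<open>simp del: upt_Suc\<close>)
  then show ?thesis
    using assms False \<open>finite S\<close> by (simp add: comp_set_def length_comp_of_set del: upt_Suc)
qed

lemma gessel_F_comp_of_set:
  assumes "S \<subseteq> {0<..<n}"
  shows "gessel_F (comp_of_set n S) = fund_qsym n S"
proof
  fix M
  show "gessel_F (comp_of_set n S) M = fund_qsym n S M"
    using assms
    by (auto simp: gessel_F_eq sum_list_comp_of_set comp_set_comp_of_set fund_qsym_def ascents_at_def
        length_sorted_list_of_multiset intro!: arg_cong[where f = of_bool])
qed

section \<open>The reading word of a parking function\<close>

lemma pos_in_nth: "distinct xs \<Longrightarrow> p < length xs \<Longrightarrow> pos_in xs (xs ! p) = p"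
  unfolding pos_in_def by (rule Least_equality) (auto simp: nth_eq_iff_index_eq)

lemma pos_in_less_length_nth:
  assumes "v \<in> set xs"
  shows "pos_in xs v < length xs" "xs ! pos_in xs v = v"
proof -
  have "\<exists>p. p < length xs \<and> xs ! p = v"
    using assms by (simp add: in_set_conv_nth)
  then have "pos_in xs v < length xs \<and> xs ! pos_in xs v = v"
    unfolding pos_in_def by (rule LeastI_ex)
  then show "pos_in xs v < length xs" "xs ! pos_in xs v = v"
    by auto
qed

lemma nth_rev_upt: "p < n \<Longrightarrow> rev [1..<n + 1] ! p = n - p"
  by (simp add: rev_nth del: upt_Suc)

lemma set_map_nth: "set xs = {..<length c} \<Longrightarrow> set (map ((!) c) xs) = set c"
proof -
  assume "set xs = {..<length c}"
  then have "set (map ((!) c) xs) = (!) c ` {..<length c}"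
    by simp
  also have "\<dots> = set c"
    by (auto simp: in_set_conv_nth)
  finally show ?thesis .
qed

lemma strict_decreasing_bounded_eq:
  fixes f :: "nat \<Rightarrow> nat"
  assumes dec: "\<And>v. 0 < v \<Longrightarrow> v < n \<Longrightarrow> f (Suc v) < f v"
    and bound: "\<And>v. 0 < v \<Longrightarrow> v \<le> n \<Longrightarrow> f v < n"
    and v: "0 < v" "v \<le> n"
  shows "f v = n - v"
proof -
  have "f v \<le> n - v"
    using v
  proof (induction v rule: nat_induct_non_zero)
    case 1
    then show ?case using bound[of 1] by simp
  next
    case (Suc m)
    then show ?case using dec[of m] by simp
  qed
  moreover have "n - v \<le> f v"
    using v(2)
  proof (induction v rule: inc_induct)
    case (step m)
    then show ?case using dec[of m] v by simp
  qed simp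
  ultimately show ?thesis by simp
qed

lemma pos_in_descending_iff:
  assumes "distinct \<sigma>" "set \<sigma> = {1..n}"
  shows "(\<forall>i. 0 < i \<and> i < n \<longrightarrow> pos_in \<sigma> (Suc i) < pos_in \<sigma> i) \<longleftrightarrow> \<sigma> = rev [1..<n + 1]"
proof
  have len: "length \<sigma> = n"
    using assms distinct_card by fastforce
  assume dec: "\<forall>i. 0 < i \<and> i < n \<longrightarrow> pos_in \<sigma> (Suc i) < pos_in \<sigma> i"
  have pos: "pos_in \<sigma> v = n - v" if "0 < v" "v \<le> n" for v
    using dec pos_in_less_length_nth(1)[of _ \<sigma>] assms(2) len that
    by (intro strict_decreasing_bounded_eq) auto
  show "\<sigma> = rev [1..<n + 1]"
  proof (rule nth_equalityI)
    fix p assume "p < length \<sigma>"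
    then have "pos_in \<sigma> (n - p) = p" "n - p \<in> set \<sigma>" "p < n"
      using pos[of "n - p"] len assms(2) by auto
    then show "\<sigma> ! p = rev [1..<n + 1] ! p"
      using pos_in_less_length_nth(2) nth_rev_upt by metis
  qed (simp add: len)
next
  assume rev: "\<sigma> = rev [1..<n + 1]"
  have "pos_in \<sigma> v = n - v" if v: "0 < v" "v \<le> n" for v
  proof -
    have "\<sigma> ! (n - v) = v"
      unfolding rev using v by (subst nth_rev_upt) auto
    then show ?thesis
      using pos_in_nth[OF assms(1), of "n - v"] rev v by simp
  qed
  then show "\<forall>i. 0 < i \<and> i < n \<longrightarrow> pos_in \<sigma> (Suc i) < pos_in \<sigma> i"
    by auto
qed

definition reading_order :: "nat \<Rightarrow> bool list \<Rightarrow> nat list" where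
  "reading_order n D = concat (map (\<lambda>k. rev (filter (\<lambda>i. area D ! i = k) [0..<n])) (rev [0..<n]))"

lemma sigma_pf_reading_order: "sigma_pf n D c = map ((!) c) (reading_order n D)"
proof -
  have "concat (map (\<lambda>i. if P i then [c ! i] else []) xs) = map ((!) c) (filter P xs)" for P xs
    by (induction xs) auto
  then show ?thesis
    by (simp add: sigma_pf_def reading_order_def map_concat rev_map comp_def)
qed

lemma sorted_wrt_concat_map:
  assumes "\<And>x. x \<in> set xs \<Longrightarrow> sorted_wrt R (f x)"
    and "sorted_wrt (\<lambda>x y. \<forall>u\<in>set (f x). \<forall>v\<in>set (f y). R u v) xs"
  shows "sorted_wrt R (concat (map f xs))"
  using assms by (induction xs) (auto simp: sorted_wrt_append)

lemma sorted_wrt_irrefl_distinct: "sorted_wrt R xs \<Longrightarrow> (\<And>x. \<not> R x x) \<Longrightarrow> distinct xs"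
  by (induction xs) auto

lemma sorted_wrt_reading_order:
  "sorted_wrt (\<lambda>i j. area D ! j < area D ! i \<or> area D ! i = area D ! j \<and> j < i) (reading_order n D)"
  unfolding reading_order_def
proof (rule sorted_wrt_concat_map)
  show "sorted_wrt (\<lambda>i j. area D ! j < area D ! i \<or> area D ! i = area D ! j \<and> j < i)
      (rev (filter (\<lambda>i. area D ! i = k) [0..<n]))" for k
    by (auto simp: sorted_wrt_rev sorted_wrt_filter
        intro: sorted_wrt_mono_rel[OF _ sorted_wrt_filter[OF sorted_wrt_upt]])
  show "sorted_wrt (\<lambda>k l. \<forall>i\<in>set (rev (filter (\<lambda>i. area D ! i = k) [0..<n])).
      \<forall>j\<in>set (rev (filter (\<lambda>i. area D ! i = l) [0..<n])).
        area D ! j < area D ! i \<or> area D ! i = area D ! j \<and> j < i) (rev [0..<n])"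
    by (auto simp: sorted_wrt_rev intro: sorted_wrt_mono_rel[OF _ sorted_wrt_upt])
qed

lemma length_xcoord_dyck_path: "dyck_path n D \<Longrightarrow> length (xcoord D) = n"
proof -
  have "length (xcoord_aux e s) = length (filter id s)" for e s
    by (induction e s rule: xcoord_aux.induct) auto
  then show "dyck_path n D \<Longrightarrow> length (xcoord D) = n"
    by (simp add: dyck_path_def xcoord_def)
qed

definition pf_reading_decreasing :: "nat \<Rightarrow> bool list \<Rightarrow> nat list" where
  "pf_reading_decreasing n D = map (\<lambda>i. n - pos_in (reading_order n D) i) [0..<n]"

context
  fixes n :: nat and D :: "bool list"
  assumes n_rows: "length (xcoord D) = n"
begin

lemma area_nth: "i < n \<Longrightarrow> area D ! i = i - xcoord D ! i"
  using n_rows by (simp add: area_def)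

lemma set_reading_order: "set (reading_order n D) = {..<n}"
  using area_nth by (auto simp: reading_order_def)

lemma distinct_reading_order: "distinct (reading_order n D)"
  using sorted_wrt_reading_order by (rule sorted_wrt_irrefl_distinct) auto

lemma length_reading_order: "length (reading_order n D) = n"
  using distinct_card[OF distinct_reading_order] by (simp add: set_reading_order)

lemma reading_order_same_column:
  assumes "i < j" "j < n" "xcoord D ! i = xcoord D ! j"
  shows "pos_in (reading_order n D) j < pos_in (reading_order n D) i"
proof -
  let ?L = "reading_order n D"
  have i: "pos_in ?L i < n" "?L ! pos_in ?L i = i" and j: "pos_in ?L j < n" "?L ! pos_in ?L j = j"
    using assms pos_in_less_length_nth[of _ ?L] set_reading_order length_reading_order by auto
  have "\<not> pos_in ?L i < pos_in ?L j"
  proof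
    assume "pos_in ?L i < pos_in ?L j"
    then have "area D ! j < area D ! i \<or> area D ! i = area D ! j \<and> j < i"
      using sorted_wrt_reading_order[of D n] i j length_reading_order
      unfolding sorted_wrt_iff_nth_less by metis
    then show False
      using assms area_nth by auto
  qed
  moreover have "pos_in ?L i \<noteq> pos_in ?L j"
  proof
    assume "pos_in ?L i = pos_in ?L j"
    then have "i = j"
      using i(2) j(2) by metis
    then show False
      using assms(1) by simp
  qed
  ultimately show ?thesis by simp
qed

lemma sigma_pf_reading_decreasing: "sigma_pf n D (pf_reading_decreasing n D) = rev [1..<n + 1]"
proof (rule nth_equalityI)
  let ?L = "reading_order n D"
  fix p assume "p < length (sigma_pf n D (pf_reading_decreasing n D))"
  then have p: "p < n"
    by (simp add: sigma_pf_reading_order length_reading_order)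
  then have "?L ! p < n"
    using nth_mem[of p ?L] set_reading_order length_reading_order by auto
  then show "sigma_pf n D (pf_reading_decreasing n D) ! p = rev [1..<n + 1] ! p"
    unfolding nth_rev_upt[OF p] using p pos_in_nth[OF distinct_reading_order, of p]
    by (simp add: sigma_pf_reading_order length_reading_order pf_reading_decreasing_def)
qed (simp add: sigma_pf_reading_order length_reading_order)

lemma pf_reading_decreasing_parking_function: "pf_reading_decreasing n D \<in> parking_functions n D"
  unfolding parking_functions_def
proof (intro CollectI conjI allI impI)
  let ?c = "pf_reading_decreasing n D"
  show "length ?c = n"
    by (simp add: pf_reading_decreasing_def)
  have "set ?c = set (map ((!) ?c) (reading_order n D))"
    using set_reading_order by (intro set_map_nth[symmetric]) (simp add: pf_reading_decreasing_def)
  also have "\<dots> = {1..n}"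
    using sigma_pf_reading_decreasing
    by (simp add: sigma_pf_reading_order atLeastLessThanSuc_atLeastAtMost del: upt_Suc)
  finally show "set ?c = {1..n}" .
  then show "distinct ?c"
    by (intro card_distinct) (simp add: pf_reading_decreasing_def)
  fix i j assume "i < j \<and> j < n \<and> xcoord D ! i = xcoord D ! j"
  then show "?c ! i < ?c ! j"
    using reading_order_same_column[of i j]
      pos_in_less_length_nth(1)[of i "reading_order n D"] set_reading_order length_reading_order
    by (auto simp: pf_reading_decreasing_def)
qed

lemma sigma_pf_inj:
  assumes "length c = n" "length c' = n" "sigma_pf n D c = sigma_pf n D c'"
  shows "c = c'"
proof -
  have "map ((!) c) (reading_order n D) = map ((!) c') (reading_order n D)"
    using assms(3) by (simp add: sigma_pf_reading_order)
  then show ?thesis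
    using assms(1,2) set_reading_order by (intro nth_equalityI) (auto simp: map_eq_conv)
qed

lemma parking_functions_reading_decreasing:
  "parking_functions n D \<inter> {c. sigma_pf n D c = rev [1..<n + 1]} = {pf_reading_decreasing n D}"
  using pf_reading_decreasing_parking_function sigma_pf_reading_decreasing
    sigma_pf_inj[of _ "pf_reading_decreasing n D"]
  by (auto simp: parking_functions_def simp del: upt_Suc)

lemma dinv_path_eq: "dinv_path n D = dinv_pf n D (pf_reading_decreasing n D)"
proof -
  have "(THE c. c \<in> parking_functions n D \<and> sigma_pf n D c = rev [1..<n + 1]) =
      pf_reading_decreasing n D"
    using parking_functions_reading_decreasing by (intro the_equality) blast+
  then show ?thesis
    by (simp add: dinv_path_def del: upt_Suc)
qed

lemma omega_at_one_gessel_pides: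
  assumes c: "c \<in> parking_functions n D"
  shows "omega_at_one n (gessel_F (pides n D c)) = of_bool (sigma_pf n D c = rev [1..<n + 1])"
proof -
  let ?\<sigma> = "sigma_pf n D c"
  define S where "S = {i. 1 \<le> i \<and> i < n \<and> pos_in ?\<sigma> i > pos_in ?\<sigma> (i + 1)}"
  have "length c = n" "set c = {1..n}"
    using c by (auto simp: parking_functions_def)
  then have "set ?\<sigma> = {1..n}"
    using set_map_nth[of "reading_order n D" c] set_reading_order by (simp add: sigma_pf_reading_order)
  moreover have "distinct ?\<sigma>"
    using \<open>set ?\<sigma> = {1..n}\<close>
    by (intro card_distinct) (simp add: sigma_pf_reading_order length_reading_order)
  ultimately have "(\<forall>i. 0 < i \<and> i < n \<longrightarrow> pos_in ?\<sigma> (Suc i) < pos_in ?\<sigma> i) \<longleftrightarrow>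
      ?\<sigma> = rev [1..<n + 1]"
    using pos_in_descending_iff by blast
  moreover have "{0<..<n} \<subseteq> S \<longleftrightarrow> (\<forall>i. 0 < i \<and> i < n \<longrightarrow> pos_in ?\<sigma> (Suc i) < pos_in ?\<sigma> i)"
    by (auto simp: S_def subset_iff)
  ultimately have S_full: "{0<..<n} \<subseteq> S \<longleftrightarrow> ?\<sigma> = rev [1..<n + 1]"
    by blast
  have "pides n D c = comp_of_set n S"
    by (simp add: pides_def S_def)
  moreover have "S \<subseteq> {0<..<n}"
    by (auto simp: S_def)
  ultimately show ?thesis
    using S_full by (simp add: gessel_F_comp_of_set omega_at_one_fund_qsym del: upt_Suc)
qed

end

lemma finite_parking_functions: "finite (parking_functions n D)"
proof (rule finite_subset)
  show "parking_functions n D \<subseteq> {c. set c \<subseteq> {1..n} \<and> length c = n}"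
    by (auto simp: parking_functions_def)
qed (rule finite_lists_length_eq, simp)

section \<open>The substitution q := 1 + q\<close>

lemma pcompose_monom_1: "pcompose (monom 1 d) q = q ^ d"
  by (induction d) (simp_all add: monom_Suc pcompose_pCons pcompose_1)

lemma pcompose_of_nat: "pcompose (of_nat k) q = of_nat k"
  by (simp add: of_nat_poly)

lemma LLT_shift_eq:
  "LLT_shift n D =
     (\<lambda>M. \<Sum>c\<in>parking_functions n D. [:1, 1:] ^ dinv_pf n D c * gessel_F (pides n D c) M)"
  by (rule ext) (simp only: LLT_shift_def LLT_def pcompose_sum pcompose_mult pcompose_monom_1
      pcompose_of_nat gessel_F_def)

theorem proposition3p1:
  fixes n :: nat and D :: "bool list" and P :: "nat list \<Rightarrow> int poly"
  assumes "dyck_path n D"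
    and "\<forall>M. LLT_shift n D M = (\<Sum>\<mu>\<in>partitions n. P \<mu> * elem_sym_part \<mu> M)"
  shows "(\<Sum>\<mu>\<in>partitions n. P \<mu>) = [:1, 1:] ^ dinv_path n D"
proof -
  have n_rows: "length (xcoord D) = n"
    using assms(1) by (rule length_xcoord_dyck_path)
  have expansion: "LLT_shift n D = (\<lambda>M. \<Sum>\<mu>\<in>partitions n. P \<mu> * elem_sym_part \<mu> M)"
    using assms(2) by (simp add: fun_eq_iff)
  have "(\<Sum>\<mu>\<in>partitions n. P \<mu>) = (\<Sum>\<mu>\<in>partitions n. P \<mu> * omega_at_one n (elem_sym_part \<mu>))"
    using omega_at_one_elem_sym_part by (intro sum.cong refl) (auto simp: partitions_def)
  also have "\<dots> = omega_at_one n (LLT_shift n D)"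
    by (simp add: expansion omega_at_one_sum omega_at_one_cmult)
  also have "\<dots> = (\<Sum>c\<in>parking_functions n D.
      [:1, 1:] ^ dinv_pf n D c * of_bool (sigma_pf n D c = rev [1..<n + 1]))"
    unfolding LLT_shift_eq omega_at_one_sum omega_at_one_cmult
    using omega_at_one_gessel_pides[OF n_rows]
    by (intro sum.cong refl arg_cong2[where f = "(*)"]) blast
  also have "\<dots> = [:1, 1:] ^ dinv_path n D"
    unfolding sum_mult_of_bool_eq[OF finite_parking_functions]
      parking_functions_reading_decreasing[OF n_rows] dinv_path_eq[OF n_rows]
    by simp
  finally show ?thesis .
qed

end
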